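(* Let $0<\alpha\leq2$, let $X$ be a scalar symmetric $\alpha$-stable Lévy process with $X_0=0$ and $\mathbb{E}[e^{iuX_t}]=e^{-|u|^\alpha t}$, let $T>0$, $n\in\mathbb{N}$, $\Delta_n=T/n$, $t_k=k\Delta_n$, and $\hat{\mathcal{O}}_{T,n}(0)=\Delta_n\sum_{k=1}^n\mathbf{1}(X_{t_{k-1}}\geq0)$. Then \[ \|\hat{\mathcal{O}}_{T,n}(0)\|^2_{L^2(\mathbb{P})}=\frac38T^2+\frac38T\Delta_n+\frac14\Delta_n^2. \] *)

theory Defs
  imports "HOL-Probability.Probability"
begin

definition sym_stable_levy :: "'a measure \<Rightarrow> real \<Rightarrow> (real \<Rightarrow> 'a \<Rightarrow> real) \<Rightarrow> bool" where
  "sym_stable_levy M \<alpha> X \<longleftrightarrow>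
     prob_space M \<and>
     (\<forall>t\<ge>0. X t \<in> borel_measurable M) \<and>
     (AE \<omega> in M. X 0 \<omega> = 0) \<and>
     (\<forall>(s::nat \<Rightarrow> real) m. 0 \<le> s 0 \<and> strict_mono s \<longrightarrow>
        prob_space.indep_vars M (\<lambda>_. borel) (\<lambda>i \<omega>. X (s (Suc i)) \<omega> - X (s i) \<omega>) {..<m}) \<and>
     (\<forall>s t u. 0 \<le> s \<and> s \<le> t \<longrightarrow>
        char (distr M borel (\<lambda>\<omega>. X t \<omega> - X s \<omega>)) u
          = exp (- complex_of_real (\<bar>u\<bar> powr \<alpha> * (t - s)))) \<and>
     (AE \<omega> in M. (\<forall>t\<ge>0. continuous (at_right t) (\<lambda>r. X r \<omega>)) \<and>
                  (\<forall>t>0. \<exists>l. ((\<lambda>r. X r \<omega>) \<longlongrightarrow> l) (at_left t)))"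

definition occ_est :: "(real \<Rightarrow> 'a \<Rightarrow> real) \<Rightarrow> real \<Rightarrow> nat \<Rightarrow> 'a \<Rightarrow> real" where
  "occ_est X T n \<omega> = (T / real n) *
     (\<Sum>k = 1..n. indicator {0..} (X (real (k - 1) * (T / real n)) \<omega>))"

end

theory Submission
  imports Defs
begin

(* With D = T / n and E_k = {X (k D) >= 0}, the second moment of the estimator is
   D^2 times the sum of P(E_j \<inter> E_k) over j, k < n.  Since X 0 = 0 a.s., P(E_0) = 1.  For
   t > 0 the law of X t is symmetric and its characteristic function is integrable, so it has
   no atoms and P(E_k) = 1/2 for k >= 1.  For 0 < a < b, reversing time on [0, b] swaps the
   independent increments X a - X 0 and X b - X a, whence
   P(X a >= 0, X b >= 0) + P(X (b - a) >= 0, X b >= 0) = P(X b >= 0) + P(X a >= 0) P(X b - X a >= 0) = 3/4.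
   Pairing (j, k) with (k - j, k) then evaluates the double sum as (3 n^2 + 3 n + 2) / 8. *)

lemma square_le_exp_abs_powr:
  fixes \<alpha> c :: real
  assumes \<alpha>: "0 < \<alpha>" and c: "0 < c"
  obtains K where "\<And>t::real. t\<^sup>2 \<le> K * exp (\<bar>t\<bar> powr \<alpha> * c)"
proof
  define k where "k = nat \<lceil>2 / \<alpha>\<rceil>"
  have "2 / \<alpha> \<le> real k" unfolding k_def by linarith
  hence k_ge: "2 \<le> \<alpha> * real k" using \<alpha> by (simp add: field_simps)
  hence k_pos: "0 < k" by (cases k) auto
  fix t :: real
  define y where "y = \<bar>t\<bar> powr \<alpha> * c"
  have y: "0 \<le> y" using c by (simp add: y_def)
  show "t\<^sup>2 \<le> (1 + (real k / c) ^ k) * exp y"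
  proof (cases "\<bar>t\<bar> \<le> 1")
    case True
    hence "t\<^sup>2 \<le> 1" by (simp add: abs_square_le_1)
    also have "1 \<le> (1 + (real k / c) ^ k) * 1" using c by simp
    also have "\<dots> \<le> (1 + (real k / c) ^ k) * exp y" using c y by (intro mult_left_mono) auto
    finally show ?thesis .
  next
    case False
    have "t\<^sup>2 = \<bar>t\<bar> powr 2" using False by simp
    also have "\<dots> \<le> \<bar>t\<bar> powr (\<alpha> * real k)" using False k_ge by (intro powr_mono) auto
    also have "\<dots> = (y / c) ^ k"
      using False c by (simp add: y_def powr_powr [symmetric] powr_realpow)
    also have "\<dots> = (real k / c) ^ k * (y / real k) ^ k"
      using k_pos by (simp add: power_mult_distrib [symmetric])
    also have "(y / real k) ^ k \<le> exp y"
      using k_pos y order_trans [OF power_mono exp_ge_one_plus_x_over_n_power_n] by force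
    also have "(real k / c) ^ k * exp y \<le> (1 + (real k / c) ^ k) * exp y" by simp
    finally show ?thesis using c by (simp add: mult_left_mono)
  qed
qed

lemma integrable_exp_neg_abs_powr:
  fixes \<alpha> c :: real
  assumes "0 < \<alpha>" and "0 < c"
  shows "integrable lborel (\<lambda>t::real. exp (- (\<bar>t\<bar> powr \<alpha> * c)))"
proof -
  obtain K where K: "\<And>t::real. t\<^sup>2 \<le> K * exp (\<bar>t\<bar> powr \<alpha> * c)"
    using square_le_exp_abs_powr assms by blast
  show ?thesis
  proof (rule Bochner_Integration.integrable_bound)
    show "integrable lborel (\<lambda>t::real. (1 + K) * inverse (1 + t\<^sup>2))"
      using integrable_inverse_1_plus_square by (simp add: set_integrable_def)
    show "AE t in lborel. norm (exp (- (\<bar>t\<bar> powr \<alpha> * c))) \<le> norm ((1 + K) * inverse (1 + t\<^sup>2))"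
    proof (intro AE_I2)
      fix t :: real
      have "1 \<le> exp (\<bar>t\<bar> powr \<alpha> * c)" using assms by simp
      hence "1 + t\<^sup>2 \<le> (1 + K) * exp (\<bar>t\<bar> powr \<alpha> * c)"
        using K [of t] unfolding distrib_right mult_1_left by linarith
      hence "exp (- (\<bar>t\<bar> powr \<alpha> * c)) * (1 + t\<^sup>2) \<le> 1 + K"
        by (simp add: exp_minus field_simps)
      thus "norm (exp (- (\<bar>t\<bar> powr \<alpha> * c))) \<le> norm ((1 + K) * inverse (1 + t\<^sup>2))"
        by (simp add: field_simps add_pos_nonneg)
    qed
  qed measurable
qed

lemma norm_integral_le_integral_of_bound:
  fixes f :: "real \<Rightarrow> 'b::{banach, second_countable_topology}"
  assumes g: "integrable lborel g" and bound: "\<And>x. norm (f x) \<le> g x"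
  shows "norm (integral\<^sup>L lborel f) \<le> integral\<^sup>L lborel g"
proof (cases "integrable lborel f")
  case True
  have "norm (integral\<^sup>L lborel f) \<le> (LINT x|lborel. norm (f x))" by (rule integral_norm_bound)
  also have "\<dots> \<le> integral\<^sup>L lborel g" using True g bound by (intro integral_mono) auto
  finally show ?thesis .
next
  case False
  have "0 \<le> integral\<^sup>L lborel g" using bound by (intro integral_nonneg_AE) (auto intro: order_trans [OF norm_ge_zero])
  thus ?thesis using False by (simp add: not_integrable_integral_eq)
qed

lemma (in real_distribution) prob_Ioc_le_integral_norm_char:
  assumes integrable: "integrable lborel (\<lambda>t. norm (char M t))"
    and "0 < \<epsilon>" and atoms: "prob {x - \<epsilon>} = 0" "prob {x + \<epsilon>} = 0"
  shows "prob {x - \<epsilon><..x + \<epsilon>} \<le> \<epsilon> / pi * (LINT t|lborel. norm (char M t))"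
proof -
  define J where "J = (LINT t|lborel. norm (char M t))"
  define F where "F t = (iexp (- (t * (x - \<epsilon>))) - iexp (- (t * (x + \<epsilon>)))) / (\<i> * complex_of_real t)" for t
  have F: "norm (F t) \<le> 2 * \<epsilon>" for t
  proof (cases "t = 0")
    case False
    have "norm (F t) = norm ((iexp (t * (\<epsilon> - x)) - iexp (t * (- \<epsilon> - x))) / (\<i> * t))"
      unfolding F_def by (simp add: algebra_simps)
    also have "\<dots> \<le> (\<epsilon> - x) - (- \<epsilon> - x)" using False \<open>0 < \<epsilon>\<close> by (intro Levy_Inversion_aux2) auto
    finally show ?thesis by simp
  qed (use \<open>0 < \<epsilon>\<close> in \<open>simp add: F_def\<close>)
  have "norm (1 / (2 * pi) * (CLBINT t = - real T..real T. F t * char M t)) \<le> \<epsilon> / pi * J" for T :: nat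
  proof -
    have "norm (CLBINT t = - real T..real T. F t * char M t)
        = norm (CLINT t|lborel. indicator {- real T..real T} t *\<^sub>R (F t * char M t))"
      by (simp add: interval_integral_Icc set_lebesgue_integral_def)
    also have "\<dots> \<le> (LINT t|lborel. 2 * \<epsilon> * norm (char M t))"
      using integrable F \<open>0 < \<epsilon>\<close> by (intro norm_integral_le_integral_of_bound)
        (auto simp: indicator_def norm_mult intro: mult_right_mono)
    also have "\<dots> = 2 * \<epsilon> * J" by (simp add: J_def)
    finally have "norm (CLBINT t = - real T..real T. F t * char M t) / (2 * pi) \<le> 2 * \<epsilon> * J / (2 * pi)"
      by (intro divide_right_mono) auto
    thus ?thesis by (simp add: norm_divide)
  qed
  moreover have "(\<lambda>T. 1 / (2 * pi) * (CLBINT t = - real T..real T. F t * char M t))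
      \<longlonglongrightarrow> complex_of_real (prob {x - \<epsilon><..x + \<epsilon>})"
    using Levy_Inversion [of "x - \<epsilon>" "x + \<epsilon>"] atoms \<open>0 < \<epsilon>\<close> unfolding F_def by simp
  ultimately show ?thesis
    unfolding J_def using LIMSEQ_le_const2 [OF tendsto_norm] by fastforce
qed

lemma (in real_distribution) prob_singleton_eq_0_if_integrable_char:
  assumes integrable: "integrable lborel (\<lambda>t. norm (char M t))"
  shows "prob {x} = 0"
proof -
  define J where "J = (LINT t|lborel. norm (char M t))"
  have J: "0 \<le> J" unfolding J_def by (intro integral_nonneg_AE) auto
  have small: "prob {x} \<le> e / pi * J" if "0 < e" for e
  proof -
    define C where "C = (\<lambda>y. y - x) ` {y. prob {y} \<noteq> 0} \<union> (\<lambda>y. x - y) ` {y. prob {y} \<noteq> 0}"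
    have "countable C" unfolding C_def using countable_support by auto
    then obtain \<epsilon> where "\<epsilon> \<in> {0<..<e}" "\<epsilon> \<notin> C"
      using open_minus_countable [of C "{0<..<e}"] \<open>0 < e\<close> by auto
    hence \<epsilon>: "0 < \<epsilon>" "\<epsilon> < e" and atoms: "prob {x - \<epsilon>} = 0" "prob {x + \<epsilon>} = 0"
      unfolding C_def by (auto simp: image_iff)
    have "prob {x} \<le> prob {x - \<epsilon><..x + \<epsilon>}" using \<epsilon> by (intro finite_measure_mono) auto
    also have "\<dots> \<le> \<epsilon> / pi * J"
      unfolding J_def by (rule prob_Ioc_le_integral_norm_char [OF integrable \<epsilon>(1) atoms])
    also have "\<dots> \<le> e / pi * J" using \<epsilon> J by (intro mult_right_mono divide_right_mono) auto
    finally show ?thesis .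
  qed
  have "((\<lambda>e. e / pi * J) \<longlongrightarrow> 0) (at_right 0)" by (auto intro!: tendsto_eq_intros)
  moreover have "\<forall>\<^sub>F e in at_right 0. prob {x} \<le> e / pi * J"
    using small eventually_at_right_less [of 0] by (auto elim: eventually_mono)
  ultimately have "prob {x} \<le> 0" by (intro tendsto_lowerbound) auto
  thus ?thesis using measure_nonneg [of M "{x}"] by linarith
qed

lemma (in real_distribution) prob_atLeast_0_eq_half_if_symmetric:
  assumes symmetric: "\<And>u. char M (- u) = char M u" and no_atom: "prob {0} = 0"
  shows "prob {0..} = 1/2"
proof -
  have "distr M borel uminus = M"
  proof (rule Levy_uniqueness)
    show "real_distribution (distr M borel uminus)" by (intro real_distribution_distr) simp
    show "real_distribution M" ..
    show "char (distr M borel uminus) = char M"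
      using symmetric by (simp add: char_def integral_distr fun_eq_iff)
  qed
  hence "prob {0..} = measure (distr M borel uminus) {0..}" by simp
  also have "\<dots> = prob {..0}" by (subst measure_distr) (auto intro!: arg_cong [where f = prob])
  finally have reflect: "prob {0..} = prob {..0}" .
  have "prob ({0..} \<union> {..0}) = prob {0..} + prob {..0} - prob ({0..} \<inter> {..0})"
    by (rule measure_Un3) (auto simp: fmeasurable_eq_sets)
  moreover have "{0..} \<union> {..0} = space M" "{0..} \<inter> {..0} = {0::real}" by auto
  moreover have "prob UNIV = 1" using prob_space by simp
  ultimately show ?thesis using reflect no_atom by simp
qed

lemma (in prob_space) indep_vars_imp_indep_var:
  assumes indep: "indep_vars M' X I" and "i \<in> I" "j \<in> I" "i \<noteq> j"
  shows "indep_var (M' i) (X i) (M' j) (X j)"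
proof -
  have "indep_var (PiM {i} M') (\<lambda>\<omega>. restrict (\<lambda>k. X k \<omega>) {i}) (PiM {j} M') (\<lambda>\<omega>. restrict (\<lambda>k. X k \<omega>) {j})"
    using assms by (intro indep_var_restrict) auto
  hence "indep_var (M' i) ((\<lambda>f. f i) \<circ> (\<lambda>\<omega>. restrict (\<lambda>k. X k \<omega>) {i}))
                   (M' j) ((\<lambda>f. f j) \<circ> (\<lambda>\<omega>. restrict (\<lambda>k. X k \<omega>) {j}))"
    by (rule indep_var_compose) auto
  thus ?thesis by (simp add: comp_def)
qed

lemma (in prob_space) indep_set_commute:
  assumes "indep_set A B"
  shows "indep_set B A"
  unfolding indep_sets2_eq
proof (intro conjI ballI)
  show "B \<subseteq> events" "A \<subseteq> events" using assms by (simp_all add: indep_sets2_eq)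
  fix b a assume "b \<in> B" "a \<in> A"
  thus "prob (b \<inter> a) = prob b * prob a"
    using assms unfolding indep_sets2_eq by (simp add: Int_commute mult.commute)
qed

lemma (in prob_space) indep_var_commute:
  assumes "indep_var S X T Y"
  shows "indep_var T Y S X"
  using assms indep_set_commute unfolding indep_var_eq by blast

lemma (in prob_space) prob_pair_eq_if_indep_distr_eq:
  assumes "indep_var S A T B" "indep_var S A' T B'"
    and "distr M S A = distr M S A'" "distr M T B = distr M T B'"
    and "P \<in> sets (S \<Otimes>\<^sub>M T)"
  shows "prob {\<omega> \<in> space M. (A \<omega>, B \<omega>) \<in> P} = prob {\<omega> \<in> space M. (A' \<omega>, B' \<omega>) \<in> P}"
proof -
  have rv: "random_variable (S \<Otimes>\<^sub>M T) (\<lambda>\<omega>. (A \<omega>, B \<omega>))" "random_variable (S \<Otimes>\<^sub>M T) (\<lambda>\<omega>. (A' \<omega>, B' \<omega>))"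
    using assms(1,2) by (auto intro!: measurable_Pair dest: indep_var_rv1 indep_var_rv2)
  have "distr M (S \<Otimes>\<^sub>M T) (\<lambda>\<omega>. (A \<omega>, B \<omega>)) = distr M (S \<Otimes>\<^sub>M T) (\<lambda>\<omega>. (A' \<omega>, B' \<omega>))"
    using assms(1-4) unfolding indep_var_distribution_eq by metis
  hence "measure (distr M (S \<Otimes>\<^sub>M T) (\<lambda>\<omega>. (A \<omega>, B \<omega>))) P = measure (distr M (S \<Otimes>\<^sub>M T) (\<lambda>\<omega>. (A' \<omega>, B' \<omega>))) P"
    by simp
  thus ?thesis using rv \<open>P \<in> sets (S \<Otimes>\<^sub>M T)\<close> by (simp add: measure_distr vimage_def Int_def conj_commute)
qed

lemma (in prob_space) prob_nonneg_and_sum_nonneg: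
  fixes A B :: "'a \<Rightarrow> real"
  assumes indep: "indep_var borel A borel B"
    and half: "prob {\<omega> \<in> space M. 0 \<le> A \<omega>} = 1/2" "prob {\<omega> \<in> space M. 0 \<le> B \<omega>} = 1/2"
      "prob {\<omega> \<in> space M. 0 \<le> A \<omega> + B \<omega>} = 1/2"
  shows "prob {\<omega> \<in> space M. 0 \<le> A \<omega> \<and> 0 \<le> A \<omega> + B \<omega>}
       + prob {\<omega> \<in> space M. 0 \<le> B \<omega> \<and> 0 \<le> A \<omega> + B \<omega>} = 3/4"
proof -
  have [measurable]: "A \<in> borel_measurable M" "B \<in> borel_measurable M"
    using indep by (auto dest: indep_var_rv1 indep_var_rv2)
  define E1 where "E1 = {\<omega> \<in> space M. 0 \<le> A \<omega> \<and> 0 \<le> A \<omega> + B \<omega>}"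
  define E2 where "E2 = {\<omega> \<in> space M. 0 \<le> B \<omega> \<and> 0 \<le> A \<omega> + B \<omega>}"
  have "E1 \<union> E2 = {\<omega> \<in> space M. 0 \<le> A \<omega> + B \<omega>}" by (auto simp: E1_def E2_def)
  moreover have "E1 \<inter> E2 = {\<omega> \<in> space M. A \<omega> \<in> {0..} \<and> B \<omega> \<in> {0..}}" by (auto simp: E1_def E2_def)
  moreover have "prob {\<omega> \<in> space M. A \<omega> \<in> {0..} \<and> B \<omega> \<in> {0..}} = 1/4"
    using prob_indep_random_variable [OF indep, of "{0..}" "{0..}"] half by simp
  moreover have "prob (E1 \<union> E2) = prob E1 + prob E2 - prob (E1 \<inter> E2)"
    by (intro measure_Un3) (auto simp: E1_def E2_def fmeasurable_eq_sets)
  ultimately show ?thesis using half by (simp add: E1_def E2_def)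
qed

lemma sum_reflection_pairs:
  fixes f :: "nat \<Rightarrow> real"
  assumes "\<And>j. 1 \<le> j \<Longrightarrow> j < k \<Longrightarrow> f j + f (k - j) = c"
  shows "(\<Sum>j = 1..<k. f j) = c * real (k - 1) / 2"
proof -
  have "(\<Sum>j = 1..<k. f (k - j)) = (\<Sum>j = 1..<k. f j)"
    by (rule sum.reindex_bij_witness [of _ "\<lambda>j. k - j" "\<lambda>j. k - j"]) auto
  hence "2 * (\<Sum>j = 1..<k. f j) = (\<Sum>j = 1..<k. f j + f (k - j))" by (simp add: sum.distrib)
  also have "\<dots> = c * real (k - 1)" using assms by simp
  finally show ?thesis by simp
qed

lemma sum_square_array_of_reflection_pairs:
  fixes q :: "nat \<Rightarrow> nat \<Rightarrow> real"
  assumes corner: "q 0 0 = 1"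
    and border: "\<And>k. 1 \<le> k \<Longrightarrow> q 0 k = 1/2" and diagonal: "\<And>k. 1 \<le> k \<Longrightarrow> q k k = 1/2"
    and symmetric: "\<And>j k. q j k = q k j"
    and reflection: "\<And>j k. 1 \<le> j \<Longrightarrow> j < k \<Longrightarrow> q j k + q (k - j) k = 3/4"
    and "1 \<le> N"
  shows "(\<Sum>j<N. \<Sum>k<N. q j k) = (3 * (real N)\<^sup>2 + 3 * real N + 2) / 8"
  using \<open>1 \<le> N\<close>
proof (induction N rule: nat_induct_at_least)
  case base
  thus ?case using corner by simp
next
  case (Suc N)
  have column: "(\<Sum>j<N. q j N) = (3 * real N + 1) / 8"
  proof -
    have "(\<Sum>j<N. q j N) = q 0 N + (\<Sum>j = 1..<N. q j N)"
      using Suc.hyps by (simp add: lessThan_atLeast0 sum.atLeast_Suc_lessThan)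
    also have "(\<Sum>j = 1..<N. q j N) = 3/4 * real (N - 1) / 2"
      using reflection by (intro sum_reflection_pairs)
    finally show ?thesis using border Suc.hyps by (simp add: field_simps)
  qed
  have row: "(\<Sum>k<N. q N k) = (\<Sum>j<N. q j N)" by (intro sum.cong refl symmetric)
  have "(\<Sum>j<Suc N. \<Sum>k<Suc N. q j k)
      = (\<Sum>j<N. \<Sum>k<N. q j k) + (\<Sum>j<N. q j N) + (\<Sum>k<N. q N k) + q N N"
    by (simp add: sum.distrib)
  also have "\<dots> = (3 * (real N)\<^sup>2 + 3 * real N + 2) / 8 + 2 * ((3 * real N + 1) / 8) + 1/2"
    using Suc.IH column row diagonal [OF Suc.hyps] by linarith
  also have "\<dots> = (3 * (real (Suc N))\<^sup>2 + 3 * real (Suc N) + 2) / 8"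
    by (simp add: power2_eq_square field_simps)
  finally show ?case .
qed

lemma
  assumes "sym_stable_levy M \<alpha> X"
  shows sym_stable_levy_prob_space: "prob_space M"
    and sym_stable_levy_measurable: "0 \<le> t \<Longrightarrow> X t \<in> borel_measurable M"
    and sym_stable_levy_start: "AE \<omega> in M. X 0 \<omega> = 0"
    and sym_stable_levy_indep_increments_seq: "0 \<le> s 0 \<Longrightarrow> strict_mono s \<Longrightarrow>
      prob_space.indep_vars M (\<lambda>_. borel) (\<lambda>i \<omega>. X (s (Suc i)) \<omega> - X (s i) \<omega>) {..<m}"
    and sym_stable_levy_char_increment: "0 \<le> r \<Longrightarrow> r \<le> t \<Longrightarrow>
      char (distr M borel (\<lambda>\<omega>. X t \<omega> - X r \<omega>)) u = exp (- complex_of_real (\<bar>u\<bar> powr \<alpha> * (t - r)))"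
  using assms unfolding sym_stable_levy_def by auto

lemma sym_stable_levy_measurable_increment:
  assumes "sym_stable_levy M \<alpha> X" "0 \<le> r" "0 \<le> t"
  shows "(\<lambda>\<omega>. X t \<omega> - X r \<omega>) \<in> borel_measurable M"
  using assms by (intro borel_measurable_diff sym_stable_levy_measurable)

lemma sym_stable_levy_indep_increments:
  assumes L: "sym_stable_levy M \<alpha> X" and "0 \<le> r" "r < s" "s < t"
  shows "prob_space.indep_var M borel (\<lambda>\<omega>. X s \<omega> - X r \<omega>) borel (\<lambda>\<omega>. X t \<omega> - X s \<omega>)"
proof -
  interpret prob_space M using L by (rule sym_stable_levy_prob_space)
  define p where "p i = (if i = 0 then r else if i = 1 then s else t + real (i - 2))" for i
  have "strict_mono p"
    unfolding strict_mono_Suc_iff using assms by (auto simp: p_def)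
  hence "indep_vars (\<lambda>_. borel) (\<lambda>i \<omega>. X (p (Suc i)) \<omega> - X (p i) \<omega>) {..<2}"
    using \<open>0 \<le> r\<close> by (intro sym_stable_levy_indep_increments_seq [OF L _ \<open>strict_mono p\<close>]) (simp add: p_def)
  from indep_vars_imp_indep_var [OF this, of 0 1] show ?thesis by (simp add: p_def)
qed

lemma sym_stable_levy_distr_increment_eq:
  assumes L: "sym_stable_levy M \<alpha> X"
    and "0 \<le> r" "r \<le> t" "0 \<le> r'" "r' \<le> t'" "t - r = t' - r'"
  shows "distr M borel (\<lambda>\<omega>. X t \<omega> - X r \<omega>) = distr M borel (\<lambda>\<omega>. X t' \<omega> - X r' \<omega>)"
proof (rule Levy_uniqueness)
  interpret prob_space M using L by (rule sym_stable_levy_prob_space)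
  show "real_distribution (distr M borel (\<lambda>\<omega>. X t \<omega> - X r \<omega>))"
    "real_distribution (distr M borel (\<lambda>\<omega>. X t' \<omega> - X r' \<omega>))"
    using assms by (intro real_distribution_distr sym_stable_levy_measurable_increment [OF L]; simp)+
  show "char (distr M borel (\<lambda>\<omega>. X t \<omega> - X r \<omega>)) = char (distr M borel (\<lambda>\<omega>. X t' \<omega> - X r' \<omega>))"
    using assms by (auto simp: sym_stable_levy_char_increment [OF L])
qed

lemma sym_stable_levy_prob_increment_nonneg:
  assumes L: "sym_stable_levy M \<alpha> X" and "0 < \<alpha>" "0 \<le> r" "r < t"
  shows "measure M {\<omega> \<in> space M. 0 \<le> X t \<omega> - X r \<omega>} = 1/2"
proof -
  interpret prob_space M using L by (rule sym_stable_levy_prob_space)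
  define \<mu> where "\<mu> = distr M borel (\<lambda>\<omega>. X t \<omega> - X r \<omega>)"
  have increment [measurable]: "(\<lambda>\<omega>. X t \<omega> - X r \<omega>) \<in> borel_measurable M"
    using assms by (intro sym_stable_levy_measurable_increment [OF L]) auto
  interpret \<mu>: real_distribution \<mu> unfolding \<mu>_def by (intro real_distribution_distr increment)
  have char: "char \<mu> u = exp (- complex_of_real (\<bar>u\<bar> powr \<alpha> * (t - r)))" for u
    using assms unfolding \<mu>_def by (intro sym_stable_levy_char_increment [OF L]) auto
  have "norm (char \<mu> u) = exp (- (\<bar>u\<bar> powr \<alpha> * (t - r)))" for u
    unfolding char by (simp flip: exp_of_real)
  hence "integrable lborel (\<lambda>u. norm (char \<mu> u))"
    using assms by (simp add: integrable_exp_neg_abs_powr)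
  hence "\<mu>.prob {0} = 0" by (rule \<mu>.prob_singleton_eq_0_if_integrable_char)
  hence "\<mu>.prob {0..} = 1/2" by (intro \<mu>.prob_atLeast_0_eq_half_if_symmetric) (simp_all add: char)
  thus ?thesis unfolding \<mu>_def by (subst (asm) measure_distr) (auto simp: vimage_def Int_def conj_commute)
qed

lemma sym_stable_levy_prob_increments_nonneg_reversal:
  assumes L: "sym_stable_levy M \<alpha> X" and "0 < \<alpha>" "0 < a" "a < b"
  shows "measure M {\<omega> \<in> space M. 0 \<le> X a \<omega> - X 0 \<omega> \<and> 0 \<le> X b \<omega> - X 0 \<omega>}
       + measure M {\<omega> \<in> space M. 0 \<le> X (b - a) \<omega> - X 0 \<omega> \<and> 0 \<le> X b \<omega> - X 0 \<omega>} = 3/4"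
proof -
  interpret prob_space M using L by (rule sym_stable_levy_prob_space)
  define A where "A \<omega> = X a \<omega> - X 0 \<omega>" for \<omega>
  define B where "B \<omega> = X b \<omega> - X a \<omega>" for \<omega>
  define A' where "A' \<omega> = X (b - a) \<omega> - X 0 \<omega>" for \<omega>
  define B' where "B' \<omega> = X b \<omega> - X (b - a) \<omega>" for \<omega>
  have indep: "indep_var borel A borel B"
    unfolding A_def B_def using assms by (intro sym_stable_levy_indep_increments [OF L]) auto
  have indep': "indep_var borel A' borel B'"
    unfolding A'_def B'_def using assms by (intro sym_stable_levy_indep_increments [OF L]) auto
  have "distr M borel B = distr M borel A'"
    unfolding B_def A'_def using assms by (intro sym_stable_levy_distr_increment_eq [OF L]) auto
  moreover have "distr M borel A = distr M borel B'"
    unfolding A_def B'_def using assms by (intro sym_stable_levy_distr_increment_eq [OF L]) auto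
  moreover define S where "S = {p \<in> space (borel \<Otimes>\<^sub>M borel). 0 \<le> fst p \<and> 0 \<le> fst p + (snd p :: real)}"
  moreover have "S \<in> sets (borel \<Otimes>\<^sub>M borel)" unfolding S_def by measurable
  ultimately have "prob {\<omega> \<in> space M. (B \<omega>, A \<omega>) \<in> S} = prob {\<omega> \<in> space M. (A' \<omega>, B' \<omega>) \<in> S}"
    by (intro prob_pair_eq_if_indep_distr_eq [OF indep_var_commute [OF indep] indep'])
  hence reversal: "prob {\<omega> \<in> space M. 0 \<le> B \<omega> \<and> 0 \<le> A \<omega> + B \<omega>}
      = prob {\<omega> \<in> space M. 0 \<le> X (b - a) \<omega> - X 0 \<omega> \<and> 0 \<le> X b \<omega> - X 0 \<omega>}"
    by (simp add: S_def A'_def B'_def add.commute space_pair_measure)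
  have sum: "A \<omega> + B \<omega> = X b \<omega> - X 0 \<omega>" for \<omega> by (simp add: A_def B_def)
  have "prob {\<omega> \<in> space M. 0 \<le> A \<omega>} = 1/2" "prob {\<omega> \<in> space M. 0 \<le> B \<omega>} = 1/2"
    "prob {\<omega> \<in> space M. 0 \<le> A \<omega> + B \<omega>} = 1/2"
    unfolding A_def B_def sum using assms
    by (simp_all add: sym_stable_levy_prob_increment_nonneg [OF L] del: diff_ge_0_iff_ge)
  from prob_nonneg_and_sum_nonneg [OF indep this]
  have "prob {\<omega> \<in> space M. 0 \<le> A \<omega> \<and> 0 \<le> A \<omega> + B \<omega>}
      + prob {\<omega> \<in> space M. 0 \<le> X (b - a) \<omega> - X 0 \<omega> \<and> 0 \<le> X b \<omega> - X 0 \<omega>} = 3/4"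
    unfolding reversal .
  thus ?thesis unfolding sum by (simp add: A_def)
qed

lemma sym_stable_levy_sum_prob_nonneg_grid:
  assumes L: "sym_stable_levy M \<alpha> X" and "0 < \<alpha>" "0 < D" "1 \<le> n"
  shows "(\<Sum>j<n. \<Sum>k<n. measure M {\<omega> \<in> space M. 0 \<le> X (real j * D) \<omega> \<and> 0 \<le> X (real k * D) \<omega>})
       = (3 * (real n)\<^sup>2 + 3 * real n + 2) / 8"
proof -
  interpret prob_space M using L by (rule sym_stable_levy_prob_space)
  have [measurable]: "X (real k * D) \<in> borel_measurable M" for k
    using assms by (intro sym_stable_levy_measurable [OF L]) simp
  have [measurable]: "X 0 \<in> borel_measurable M" by (rule sym_stable_levy_measurable [OF L]) simp
  define q where "q j k = prob {\<omega> \<in> space M. 0 \<le> X (real j * D) \<omega> - X 0 \<omega> \<and> 0 \<le> X (real k * D) \<omega> - X 0 \<omega>}" for j k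
  have half: "q 0 k = 1/2" "q k k = 1/2" if "1 \<le> k" for k
    using sym_stable_levy_prob_increment_nonneg [OF L \<open>0 < \<alpha>\<close>, of 0 "real k * D"] that assms
    by (simp_all add: q_def)
  have "(\<Sum>j<n. \<Sum>k<n. prob {\<omega> \<in> space M. 0 \<le> X (real j * D) \<omega> \<and> 0 \<le> X (real k * D) \<omega>})
      = (\<Sum>j<n. \<Sum>k<n. q j k)"
    unfolding q_def using sym_stable_levy_start [OF L]
    by (intro sum.cong refl measure_eq_AE) (auto elim: AE_mp)
  also have "\<dots> = (3 * (real n)\<^sup>2 + 3 * real n + 2) / 8"
  proof (rule sum_square_array_of_reflection_pairs)
    show "q j k + q (k - j) k = 3/4" if "1 \<le> j" "j < k" for j k
    proof -
      have shift: "real (k - j) * D = real k * D - real j * D"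
        using that by (simp add: of_nat_diff algebra_simps)
      have "0 < real j * D" "real j * D < real k * D" using that assms by auto
      from sym_stable_levy_prob_increments_nonneg_reversal [OF L \<open>0 < \<alpha>\<close> this]
      show ?thesis unfolding q_def shift .
    qed
  qed (use half \<open>1 \<le> n\<close> in \<open>auto simp: q_def conj_commute prob_space\<close>)
  finally show ?thesis .
qed

lemma (in prob_space) expectation_square_sum_indicator:
  assumes "\<And>k. k < n \<Longrightarrow> E k \<in> events"
  shows "expectation (\<lambda>\<omega>. (\<Sum>k<n. indicator (E k) \<omega> :: real)\<^sup>2)
       = (\<Sum>j<n. \<Sum>k<n. prob (E j \<inter> E k))"
proof -
  have square: "(\<Sum>k<n. indicator (E k) \<omega>)\<^sup>2 = (\<Sum>j<n. \<Sum>k<n. indicator (E j \<inter> E k) \<omega> :: real)"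
    for \<omega>
    by (simp add: power2_eq_square sum_product indicator_inter_arith)
  have integrable: "integrable M (indicator (E j \<inter> E k) :: 'a \<Rightarrow> real)" if "j < n" "k < n" for j k
    using assms that by (intro integrable_real_indicator) (auto simp: less_top [symmetric])
  have "expectation (\<lambda>\<omega>. (\<Sum>k<n. indicator (E k) \<omega> :: real)\<^sup>2)
      = (\<Sum>j<n. \<Sum>k<n. expectation (indicator (E j \<inter> E k)))"
    unfolding square using integrable
    by (subst Bochner_Integration.integral_sum;
        auto intro!: sum.cong Bochner_Integration.integral_sum integrable_sum)
  also have "\<dots> = (\<Sum>j<n. \<Sum>k<n. prob (E j \<inter> E k))"
    using assms sets.sets_into_space by (intro sum.cong refl) (simp add: Int_absorb2 le_infI1)
  finally show ?thesis .
qed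

theorem lemma11:
  fixes M :: "'a measure" and X :: "real \<Rightarrow> 'a \<Rightarrow> real"
    and \<alpha> T :: real and n :: nat
  assumes "0 < \<alpha>" and "\<alpha> \<le> 2"
    and "sym_stable_levy M \<alpha> X"
    and "T > 0" and "n \<ge> 1"
  shows "prob_space.expectation M (\<lambda>\<omega>. (occ_est X T n \<omega>)\<^sup>2)
           = 3/8 * T\<^sup>2 + 3/8 * T * (T / real n) + 1/4 * (T / real n)\<^sup>2"
proof -
  note L = \<open>sym_stable_levy M \<alpha> X\<close>
  interpret prob_space M using L by (rule sym_stable_levy_prob_space)
  define D where "D = T / real n"
  have "0 < D" using assms by (simp add: D_def)
  define E where "E k = {\<omega> \<in> space M. 0 \<le> X (real k * D) \<omega>}" for k
  have grid: "E j \<inter> E k = {\<omega> \<in> space M. 0 \<le> X (real j * D) \<omega> \<and> 0 \<le> X (real k * D) \<omega>}" for j k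
    by (auto simp: E_def)
  have events: "E k \<in> events" for k
    using sym_stable_levy_measurable [OF L, of "real k * D"] \<open>0 < D\<close> by (simp add: E_def)
  have "occ_est X T n \<omega> = D * (\<Sum>k<n. indicator (E k) \<omega>)" if "\<omega> \<in> space M" for \<omega>
    using that by (simp add: occ_est_def D_def E_def sum.atLeast1_atMost_eq indicator_def)
  hence "expectation (\<lambda>\<omega>. (occ_est X T n \<omega>)\<^sup>2) = expectation (\<lambda>\<omega>. D\<^sup>2 * (\<Sum>k<n. indicator (E k) \<omega>)\<^sup>2)"
    by (intro Bochner_Integration.integral_cong) (simp_all add: power_mult_distrib)
  also have "\<dots> = D\<^sup>2 * (\<Sum>j<n. \<Sum>k<n. prob (E j \<inter> E k))"
    using events by (simp add: expectation_square_sum_indicator)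
  also have "\<dots> = D\<^sup>2 * ((3 * (real n)\<^sup>2 + 3 * real n + 2) / 8)"
    using sym_stable_levy_sum_prob_nonneg_grid [OF L \<open>0 < \<alpha>\<close> \<open>0 < D\<close> \<open>n \<ge> 1\<close>]
    by (simp add: grid)
  also have "\<dots> = 3/8 * T\<^sup>2 + 3/8 * T * (T / real n) + 1/4 * (T / real n)\<^sup>2"
    using assms by (simp add: D_def field_simps power2_eq_square)
  finally show ?thesis .
qed

end
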